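(* Consider the reputation-based proportional-share reverse auction with ex-post payments described in the context, with budget $B>0$, worker set $U$, arbitrary bids $b_i\ge 0$, reputations $Re_i\in(0,1]$ and internal reputations $re_i\in[0,1]$. Then the total payment does not exceed the budget: $\sum_{i\in U}p_i=\sum_{i\in S}p_i\le B$.
   Context: Setting. A task publisher with budget $B>0$ faces a finite set $U$ of workers. Each worker $i\in U$ has a public accumulated reputation $Re_i\in(0,1]$ and submits a sealed bid $b_i\ge 0$. After the task, each selected worker $i$ receives an internal reputation $re_i\in[0,1]$. Mechanism. (1) Sort the workers so that $\frac{b_1}{Re_1}\le\dots\le\frac{b_{|U|}}{Re_{|U|}}$ (ties broken arbitrarily). (2) Starting with $S=\emptyset$ and $i=1$, while $i\le|U|$ and $\frac{b_i}{Re_i}\le \frac{B}{Re_i+\sum_{j\in S}Re_j}$, set $S=S\cup\{i\}$ and $i=i+1$. Let $k=|S|$. (3) Define $\rho^*=\min\left(\frac{b_{k+1}}{Re_{k+1}},\frac{B}{\sum_{j\in S}Re_j}\right)$ (with $\frac{b_{k+1}}{Re_{k+1}}:=+\infty$ if $k=|U|$). (4) Every $i\notin S$ is paid $p_i=0$; every $i\in S$ has $p_i^{up}=Re_i\rho^*$. (5) After the task, each $i\in S$ gets $p_i'=\max\left(\frac{B\, re_i}{\sum_{j\in S}re_j},\ \rho^* re_i\right)$ and final payment $p_i=\min(p_i^{up},p_i')$. *)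

theory Defs
  imports Main Complex_Main
begin

text \<open>The list is the workers in the sorted order;
  acc is the sum of the accumulated reputations of the already selected workers.\<close>
fun select_winners :: "real \<Rightarrow> ('a \<Rightarrow> real) \<Rightarrow> ('a \<Rightarrow> real) \<Rightarrow> real \<Rightarrow> 'a list \<Rightarrow> 'a list" where
  "select_winners B b Rep acc [] = []"
| "select_winners B b Rep acc (x # xs) =
     (if b x / Rep x \<le> B / (Rep x + acc)
      then x # select_winners B b Rep (acc + Rep x) xs else [])"

definition winners :: "real \<Rightarrow> ('a \<Rightarrow> real) \<Rightarrow> ('a \<Rightarrow> real) \<Rightarrow> 'a list \<Rightarrow> 'a set" where
  "winners B b Rep ws = set (select_winners B b Rep 0 ws)"

text \<open>Threshold price rho* (step 3); if all workers are selected the first argument of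
  the min is +infinity, so rho* = B / sum of Rep over S.\<close>
definition rho_star :: "real \<Rightarrow> ('a \<Rightarrow> real) \<Rightarrow> ('a \<Rightarrow> real) \<Rightarrow> 'a list \<Rightarrow> real" where
  "rho_star B b Rep ws =
     (let k = length (select_winners B b Rep 0 ws);
          S = winners B b Rep ws
      in if k < length ws then min (b (ws ! k) / Rep (ws ! k)) (B / (\<Sum>j\<in>S. Rep j))
         else B / (\<Sum>j\<in>S. Rep j))"

definition payment :: "real \<Rightarrow> ('a \<Rightarrow> real) \<Rightarrow> ('a \<Rightarrow> real) \<Rightarrow> ('a \<Rightarrow> real) \<Rightarrow> 'a list \<Rightarrow> 'a \<Rightarrow> real" where
  "payment B b Rep re ws i =
     (let S = winners B b Rep ws; \<rho> = rho_star B b Rep ws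
      in if i \<in> S then
           min (Rep i * \<rho>) (max (B * re i / (\<Sum>j\<in>S. re j)) (\<rho> * re i))
         else 0)"

end

theory Submission
  imports Defs
begin

text \<open>Each winner i is paid at most Re i * rho*, and rho* <= B / (sum of Re j over the winners),
  so the winners receive at most B in total; losers are paid nothing. Neither the bids, the
  sorting nor the ex-post reputations matter for this bound.\<close>

lemma set_select_winners_subset: "set (select_winners B b Rep acc xs) \<subseteq> set xs"
  by (induction xs arbitrary: acc) auto

lemma winners_subset: "winners B b Rep ws \<subseteq> set ws"
  unfolding winners_def by (rule set_select_winners_subset)

lemma payment_not_winner: "i \<notin> winners B b Rep ws \<Longrightarrow> payment B b Rep re ws i = 0"
  by (simp add: payment_def)

lemma payment_le_cap:
  "i \<in> winners B b Rep ws \<Longrightarrow> payment B b Rep re ws i \<le> Rep i * rho_star B b Rep ws"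
  by (simp add: payment_def Let_def)

lemma rho_star_le_budget_share: "rho_star B b Rep ws \<le> B / (\<Sum>j\<in>winners B b Rep ws. Rep j)"
  by (simp add: rho_star_def Let_def)

lemma sum_payment_winners_le_budget:
  assumes "B \<ge> 0" and "\<forall>i\<in>winners B b Rep ws. Rep i \<ge> 0"
  shows "(\<Sum>i\<in>winners B b Rep ws. payment B b Rep re ws i) \<le> B"
proof -
  let ?S = "winners B b Rep ws"
  let ?R = "\<Sum>j\<in>?S. Rep j"
  have R_nonneg: "?R \<ge> 0" using assms(2) by (simp add: sum_nonneg)
  have "(\<Sum>i\<in>?S. payment B b Rep re ws i) \<le> (\<Sum>i\<in>?S. Rep i * rho_star B b Rep ws)"
    by (rule sum_mono) (rule payment_le_cap)
  also have "\<dots> = ?R * rho_star B b Rep ws" by (simp add: sum_distrib_right)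
  also have "\<dots> \<le> ?R * (B / ?R)"
    using rho_star_le_budget_share R_nonneg by (rule mult_left_mono)
  also have "\<dots> \<le> B" using assms(1) by (cases "?R = 0") simp_all
  finally show ?thesis .
qed

theorem theorem2:
  fixes B :: real and U :: "'a set" and b Rep re :: "'a \<Rightarrow> real" and ws :: "'a list"
  assumes "B > 0"
    and "finite U"
    and "\<forall>i\<in>U. 0 < Rep i \<and> Rep i \<le> 1"
    and "\<forall>i\<in>U. b i \<ge> 0"
    and "\<forall>i\<in>U. 0 \<le> re i \<and> re i \<le> 1"
    and "distinct ws" and "set ws = U"
    and "sorted_wrt (\<lambda>i j. b i / Rep i \<le> b j / Rep j) ws"
  shows "(\<Sum>i\<in>U. payment B b Rep re ws i) = (\<Sum>i\<in>winners B b Rep ws. payment B b Rep re ws i)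
       \<and> (\<Sum>i\<in>winners B b Rep ws. payment B b Rep re ws i) \<le> B"
proof
  have winners_U: "winners B b Rep ws \<subseteq> U" using winners_subset[of B b Rep ws] assms(7) by simp
  show "(\<Sum>i\<in>U. payment B b Rep re ws i) = (\<Sum>i\<in>winners B b Rep ws. payment B b Rep re ws i)"
    using assms(2) winners_U payment_not_winner by (intro sum.mono_neutral_right) auto
  show "(\<Sum>i\<in>winners B b Rep ws. payment B b Rep re ws i) \<le> B"
    using assms(1,3) winners_U
    by (intro sum_payment_winners_le_budget) (auto simp: less_imp_le)
qed

end
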